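(* Let $t\ge1$ and $D\ge1$ be integers. Let $X,Y$ be a section-pair having $3t$ pairwise-interlacing chords whose lengths all belong to an interval of size $D$. Then there are paths $P_1,\dots,P_t$ in $H(X,Y)$ between $x^{t}$ and $y^{t}$ such that $1\le |P_{i+1}|-|P_i|\le 2D$ for every $1\le i\le t-1$. In particular $|P_t|\ge |P_1|+t-1$.
   Context: A section-pair in a graph $G$ is a pair $X,Y$ of vertex-disjoint paths; the two endpoints of $X$ are designated its top $x^{t}$ and bottom $x^{b}$, and those of $Y$ its top $y^t$ and bottom $y^b$. For distinct $x_1,x_2\in X$, $x_1$ is above $x_2$ if $x_1$ is closer to $x^t$ along $X$ than $x_2$, otherwise below; similarly in $Y$. A chord is an edge of $G$ with one endpoint in $X$ and one in $Y$. $H(X,Y)$ is the graph with vertex set $V(X)\cup V(Y)$ whose edges are the edges of $X$, the edges of $Y$ and the chords. $|P|$ is the number of edges of a path $P$; $d_X(x_1,x_2)$ is the number of edges of the subpath of $X$ between $x_1,x_2$, similarly $d_Y$. The length of a chord $(x,y)$, $x\in X,y\in Y$, is $d_X(x^t,x)+d_Y(y^t,y)$. Two chords $(x_1,y_1),(x_2,y_2)$ with no common vertex are parallel if for some $i\in\{1,2\}$, $x_i$ is above $x_{3-i}$ and $y_i$ is above $y_{3-i}$; otherwise they are interlacing. An interval is a set of consecutive integers; its size is its number of elements. *)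

theory Defs
  imports Main
begin

definition graph :: "'a set \<Rightarrow> ('a \<Rightarrow> 'a \<Rightarrow> bool) \<Rightarrow> bool" where
  "graph V E \<longleftrightarrow> (\<forall>u v. E u v \<longrightarrow> E v u \<and> u \<noteq> v \<and> u \<in> V \<and> v \<in> V)"

definition is_path :: "'a set \<Rightarrow> ('a \<Rightarrow> 'a \<Rightarrow> bool) \<Rightarrow> 'a list \<Rightarrow> bool" where
  "is_path V E p \<longleftrightarrow> p \<noteq> [] \<and> distinct p \<and> set p \<subseteq> V \<and>
     (\<forall>i. Suc i < length p \<longrightarrow> E (p ! i) (p ! Suc i))"

definition path_len :: "'a list \<Rightarrow> nat" where
  "path_len p = length p - 1"

text \<open>Section-pair: two vertex-disjoint paths xs, ys of G; top = hd, bottom = last.\<close>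
definition section_pair :: "'a set \<Rightarrow> ('a \<Rightarrow> 'a \<Rightarrow> bool) \<Rightarrow> 'a list \<Rightarrow> 'a list \<Rightarrow> bool" where
  "section_pair V E xs ys \<longleftrightarrow> is_path V E xs \<and> is_path V E ys \<and> set xs \<inter> set ys = {}"

definition path_edge :: "'a list \<Rightarrow> 'a \<Rightarrow> 'a \<Rightarrow> bool" where
  "path_edge p u v \<longleftrightarrow> (\<exists>i. Suc i < length p \<and>
      ((p ! i = u \<and> p ! Suc i = v) \<or> (p ! i = v \<and> p ! Suc i = u)))"

definition is_chord :: "('a \<Rightarrow> 'a \<Rightarrow> bool) \<Rightarrow> 'a list \<Rightarrow> 'a list \<Rightarrow> 'a \<times> 'a \<Rightarrow> bool" where
  "is_chord E xs ys c \<longleftrightarrow> fst c \<in> set xs \<and> snd c \<in> set ys \<and> E (fst c) (snd c)"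

definition H_adj :: "('a \<Rightarrow> 'a \<Rightarrow> bool) \<Rightarrow> 'a list \<Rightarrow> 'a list \<Rightarrow> 'a \<Rightarrow> 'a \<Rightarrow> bool" where
  "H_adj E xs ys u v \<longleftrightarrow> path_edge xs u v \<or> path_edge ys u v \<or>
      is_chord E xs ys (u, v) \<or> is_chord E xs ys (v, u)"

definition H_verts :: "'a list \<Rightarrow> 'a list \<Rightarrow> 'a set" where
  "H_verts xs ys = set xs \<union> set ys"

definition pos :: "'a list \<Rightarrow> 'a \<Rightarrow> nat" where
  "pos p a = (LEAST i. i < length p \<and> p ! i = a)"

text \<open>Length of a chord (x,y): d_X(x^t,x) + d_Y(y^t,y); with tops hd xs, hd ys
these distances are the list indices.\<close>
definition chord_length :: "'a list \<Rightarrow> 'a list \<Rightarrow> 'a \<times> 'a \<Rightarrow> nat" where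
  "chord_length xs ys c = pos xs (fst c) + pos ys (snd c)"

definition above :: "'a list \<Rightarrow> 'a \<Rightarrow> 'a \<Rightarrow> bool" where
  "above p a b \<longleftrightarrow> a \<in> set p \<and> b \<in> set p \<and> a \<noteq> b \<and> pos p a < pos p b"

definition parallel :: "'a list \<Rightarrow> 'a list \<Rightarrow> 'a \<times> 'a \<Rightarrow> 'a \<times> 'a \<Rightarrow> bool" where
  "parallel xs ys c1 c2 \<longleftrightarrow>
     (above xs (fst c1) (fst c2) \<and> above ys (snd c1) (snd c2)) \<or>
     (above xs (fst c2) (fst c1) \<and> above ys (snd c2) (snd c1))"

definition interlacing :: "'a list \<Rightarrow> 'a list \<Rightarrow> 'a \<times> 'a \<Rightarrow> 'a \<times> 'a \<Rightarrow> bool" where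
  "interlacing xs ys c1 c2 \<longleftrightarrow>
     fst c1 \<noteq> fst c2 \<and> snd c1 \<noteq> snd c2 \<and> \<not> parallel xs ys c1 c2"

end

theory Submission
  imports Defs "HOL-Library.Sublist" "HOL-Library.Product_Lexorder"
begin

text \<open>
  Record a chord by its positions (i, j) on X and Y. Interlacing chords ordered by increasing i
  have decreasing j. For such chords c(1), ..., c(2m+1) the walk that goes down X to c(1),
  crosses it, climbs Y to c(2), crosses back, goes down X to c(3), ..., and finally climbs Y to
  its top is a path of H(X,Y) from the top of X to the top of Y of length
  L(c(1)) - L(c(2)) + ... + L(c(2m+1)) + 2m + 1, where L is the chord length.

  Cut the 3t chords into consecutive triples x, y, z. Since all chord lengths lie in a window
  of size D, the pair y, z contributes \<plusminus>(L(y) - L(z)) + 2 \<le> D + 1 to such a sum, and choosing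
  whether to use x as well fixes the sign so that the contribution is at least 1. The paths
  P(1), ..., P(t) are obtained by inserting these pairs one at a time, so consecutive lengths
  differ by a number in [1, 2D].
\<close>

section \<open>Alternating sums along subsequences\<close>

lemma set_mono_subseq: "subseq xs ys \<Longrightarrow> set xs \<subseteq> set ys"
  by (auto dest: list_emb_set)

lemma sorted_wrt_subseq: "subseq xs ys \<Longrightarrow> sorted_wrt R ys \<Longrightarrow> sorted_wrt R xs"
  by (induction rule: list_emb.induct) (auto dest: set_mono_subseq)

fun alt_sum :: "('b \<Rightarrow> int) \<Rightarrow> 'b list \<Rightarrow> int" where
  "alt_sum w [] = 0"
| "alt_sum w (c # cs) = w c - alt_sum w cs"

text \<open>For \<open>\<not> flip\<close> and odd-length q this is the length of the zigzag path through q
  (see \<open>zigzag_from_top\<close>); \<open>flip\<close> reverses the signs, as happens to a block of chords that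
  follows an odd number of chords.\<close>

definition zigzag_value :: "('b \<Rightarrow> int) \<Rightarrow> bool \<Rightarrow> 'b list \<Rightarrow> int" where
  "zigzag_value w flip q = (if flip then - alt_sum w q else alt_sum w q) + int (length q)"

lemma alt_sum_append:
  "alt_sum w (u @ v) = alt_sum w u + (if odd (length u) then - alt_sum w v else alt_sum w v)"
  by (induction u) auto

lemma zigzag_value_append:
  "zigzag_value w flip (u @ v) = zigzag_value w flip u + zigzag_value w (flip \<noteq> odd (length u)) v"
  unfolding zigzag_value_def by (auto simp: alt_sum_append)

text \<open>Prefixing x reverses the sign of the contribution of [y, z], and one of the two signs
  makes it at least 1; the window bounds it by D + 1.\<close>

lemma zigzag_value_pair_bounded:
  assumes "w y \<in> {\<alpha>..<\<alpha> + int D}" "w z \<in> {\<alpha>..<\<alpha> + int D}"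
  shows "\<exists>s. subseq s [x] \<and> 1 \<le> zigzag_value w (flip \<noteq> odd (length s)) [y, z]
             \<and> zigzag_value w (flip \<noteq> odd (length s)) [y, z] \<le> 2 * int D"
proof -
  have v: "zigzag_value w f [y, z] = (if f then w z - w y else w y - w z) + 2" for f
    by (simp add: zigzag_value_def)
  show ?thesis
  proof (cases "1 \<le> zigzag_value w flip [y, z]")
    case True
    then show ?thesis using assms by (intro exI[of _ "[]"]) (auto simp: v)
  next
    case False
    then show ?thesis using assms by (intro exI[of _ "[x]"]) (auto simp: v split: if_splits)
  qed
qed

lemma zigzag_values_increasing:
  assumes "3 * k + 1 \<le> length ks" "\<forall>c\<in>set ks. w c \<in> {\<alpha>..<\<alpha> + int D}"
  shows "\<exists>Q. (\<forall>m\<le>k. subseq (Q m) ks \<and> (odd (length (Q m)) \<longleftrightarrow> \<not> flip))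
           \<and> (\<forall>m<k. 1 \<le> zigzag_value w flip (Q (Suc m)) - zigzag_value w flip (Q m)
                  \<and> zigzag_value w flip (Q (Suc m)) - zigzag_value w flip (Q m) \<le> 2 * int D)"
  using assms
proof (induction k arbitrary: ks flip)
  case 0
  then obtain x r where "ks = x # r" by (cases ks) auto
  then show ?case by (intro exI[of _ "\<lambda>m. if flip then [] else [x]"]) auto
next
  case (Suc k)
  then obtain x y z rest where ks: "ks = [x] @ [y, z] @ rest"
    by (cases ks; cases "tl ks"; cases "tl (tl ks)") auto
  obtain s where s: "subseq s [x]" "1 \<le> zigzag_value w (flip \<noteq> odd (length s)) [y, z]"
    "zigzag_value w (flip \<noteq> odd (length s)) [y, z] \<le> 2 * int D"
    using zigzag_value_pair_bounded[of w y \<alpha> D z x flip] Suc.prems(2) by (auto simp: ks)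
  define flip' where "flip' = (flip \<noteq> odd (length s))"
  obtain Q' where Q': "\<forall>m\<le>k. subseq (Q' m) rest \<and> (odd (length (Q' m)) \<longleftrightarrow> \<not> flip')"
    "\<forall>m<k. 1 \<le> zigzag_value w flip' (Q' (Suc m)) - zigzag_value w flip' (Q' m)
        \<and> zigzag_value w flip' (Q' (Suc m)) - zigzag_value w flip' (Q' m) \<le> 2 * int D"
    using Suc.IH[of rest flip'] Suc.prems by (auto simp: ks)
  \<comment> \<open>The first step inserts the pair [y, z]; the later steps are those of \<open>Q'\<close>
    behind the fixed prefix \<open>s @ [y, z]\<close>.\<close>
  define Q where "Q m = (if m = 0 then s @ Q' 0 else s @ [y, z] @ Q' (m - 1))" for m
  have "subseq (Q m) ks \<and> (odd (length (Q m)) \<longleftrightarrow> \<not> flip)" if "m \<le> Suc k" for m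
  proof -
    have Q'm: "subseq (Q' (m - 1)) rest" "subseq (Q' 0) rest"
      "odd (length (Q' (m - 1))) \<longleftrightarrow> \<not> flip'" "odd (length (Q' 0)) \<longleftrightarrow> \<not> flip'"
      using Q'(1) that by auto
    moreover have "subseq (s @ Q' 0) ks"
      unfolding ks by (rule list_emb_append_mono[OF s(1) list_emb_append2]) fact
    moreover have "subseq (s @ [y, z] @ Q' (m - 1)) ks"
      unfolding ks by (intro list_emb_append_mono[OF s(1)] list_emb_append_mono list_emb_refl Q'm(1)) auto
    ultimately show ?thesis unfolding Q_def flip'_def by auto
  qed
  moreover have "zigzag_value w flip (Q (Suc m)) - zigzag_value w flip (Q m) =
      (if m = 0 then zigzag_value w flip' [y, z]
       else zigzag_value w flip' (Q' m) - zigzag_value w flip' (Q' (m - 1)))" for m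
    unfolding Q_def by (simp add: zigzag_value_append flip'_def del: append_Cons)
  ultimately show ?case using Q'(2) s(2,3) unfolding flip'_def
    by (intro exI[of _ Q]) (auto simp: less_Suc_eq_0_disj)
qed

section \<open>Paths in H(X,Y)\<close>

lemma hd_drop_take: "i \<le> j \<Longrightarrow> j < length p \<Longrightarrow> hd (drop i (take (Suc j) p)) = p ! i"
  by (simp add: hd_drop_conv_nth)

lemma last_take_Suc: "j < length p \<Longrightarrow> last (take (Suc j) p) = p ! j"
  by (simp add: take_Suc_conv_app_nth)

lemma set_drop_take_subset: "set (drop i (take j p)) \<subseteq> set (drop i p) \<inter> set (take j p)"
  using set_drop_subset[of i "take j p"] set_take_subset[of "j - i" "drop i p"] by (simp add: drop_take)

lemma is_path_append:
  assumes "is_path V E p" "is_path V E q" "set p \<inter> set q = {}" "E (last p) (hd q)"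
  shows "is_path V E (p @ q)"
  unfolding is_path_def
proof (intro conjI allI impI)
  show "p @ q \<noteq> []" "distinct (p @ q)" "set (p @ q) \<subseteq> V"
    using assms by (auto simp: is_path_def)
  fix i assume i: "Suc i < length (p @ q)"
  have "p \<noteq> []" "q \<noteq> []" using assms by (auto simp: is_path_def)
  consider "Suc i < length p" | "Suc i = length p" | "length p < Suc i" by linarith
  then show "E ((p @ q) ! i) ((p @ q) ! Suc i)"
  proof cases
    case 1 then show ?thesis using assms(1) by (simp add: is_path_def nth_append)
  next
    case 2
    then have "i = length p - 1" by simp
    then show ?thesis using assms(4) \<open>p \<noteq> []\<close> \<open>q \<noteq> []\<close>
      by (simp add: nth_append last_conv_nth hd_conv_nth)
  next
    case 3
    then have "Suc (i - length p) < length q" "Suc i - length p = Suc (i - length p)" using i by auto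
    then show ?thesis using assms(2) 3 by (simp add: is_path_def nth_append)
  qed
qed

lemma is_path_take: "is_path V E p \<Longrightarrow> 0 < n \<Longrightarrow> is_path V E (take n p)"
  unfolding is_path_def by (auto dest: in_set_takeD)

lemma is_path_drop: "is_path V E p \<Longrightarrow> n < length p \<Longrightarrow> is_path V E (drop n p)"
  unfolding is_path_def by (auto dest: in_set_dropD)

lemma is_path_rev:
  assumes sym: "\<And>u v. E u v \<Longrightarrow> E v u" and p: "is_path V E p"
  shows "is_path V E (rev p)"
  unfolding is_path_def
proof (intro conjI allI impI)
  show "rev p \<noteq> []" "distinct (rev p)" "set (rev p) \<subseteq> V" using p by (auto simp: is_path_def)
  fix i assume i: "Suc i < length (rev p)"
  define j where "j = length p - Suc (Suc i)"
  have "Suc j < length p" "length p - Suc i = Suc j" using i by (auto simp: j_def)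
  then show "E (rev p ! i) (rev p ! Suc i)"
    using p i sym by (auto simp: is_path_def rev_nth j_def)
qed

lemma H_adj_sym: "H_adj E xs ys u v \<Longrightarrow> H_adj E xs ys v u"
  unfolding H_adj_def path_edge_def by blast

lemma is_path_H_left:
  assumes "distinct xs" "xs \<noteq> []"
  shows "is_path (H_verts xs ys) (H_adj E xs ys) xs"
  using assms unfolding is_path_def H_verts_def H_adj_def path_edge_def by blast

lemma is_path_H_right:
  assumes "distinct ys" "ys \<noteq> []"
  shows "is_path (H_verts xs ys) (H_adj E xs ys) ys"
  using assms unfolding is_path_def H_verts_def H_adj_def path_edge_def by blast

lemma is_path_H_segment_left:
  "distinct xs \<Longrightarrow> i \<le> j \<Longrightarrow> j < length xs \<Longrightarrow>
    is_path (H_verts xs ys) (H_adj E xs ys) (drop i (take (Suc j) xs))"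
  by (auto intro!: is_path_drop is_path_take is_path_H_left)

lemma is_path_H_segment_right:
  "distinct ys \<Longrightarrow> i \<le> j \<Longrightarrow> j < length ys \<Longrightarrow>
    is_path (H_verts xs ys) (H_adj E xs ys) (rev (drop i (take (Suc j) ys)))"
  by (auto intro!: is_path_rev[OF H_adj_sym] is_path_drop is_path_take is_path_H_right)

section \<open>Zigzag paths\<close>

definition cross_less :: "nat \<times> nat \<Rightarrow> nat \<times> nat \<Rightarrow> bool" where
  "cross_less c d \<longleftrightarrow> fst c < fst d \<and> snd d < snd c"

definition chord_index :: "('a \<Rightarrow> 'a \<Rightarrow> bool) \<Rightarrow> 'a list \<Rightarrow> 'a list \<Rightarrow> nat \<times> nat \<Rightarrow> bool" where
  "chord_index E xs ys c \<longleftrightarrow> fst c < length xs \<and> snd c < length ys \<and> E (xs ! fst c) (ys ! snd c)"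

lemma H_adj_chord_index: "chord_index E xs ys (a, b) \<Longrightarrow> H_adj E xs ys (xs ! a) (ys ! b)"
  unfolding chord_index_def H_adj_def is_chord_def by auto

text \<open>From position s the walk goes down X to the
  first chord, crosses it, climbs Y to the second chord, crosses back and continues with the rest;
  after the last chord of an odd-length list it climbs Y to its top.\<close>

fun zigzag :: "'a list \<Rightarrow> 'a list \<Rightarrow> nat \<Rightarrow> (nat \<times> nat) list \<Rightarrow> 'a list" where
  "zigzag xs ys s [] = []"
| "zigzag xs ys s [c] = drop s (take (Suc (fst c)) xs) @ rev (take (Suc (snd c)) ys)"
| "zigzag xs ys s (c # d # cs) =
     drop s (take (Suc (fst c)) xs) @ rev (drop (snd d) (take (Suc (snd c)) ys)) @ zigzag xs ys (fst d) cs"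

lemma zigzag_step_is_path:
  assumes dx: "distinct xs" and dy: "distinct ys" and dxy: "set xs \<inter> set ys = {}"
    and ab: "s \<le> a" "a < a'" "b' \<le> b" "b < length ys"
    and ch: "chord_index E xs ys (a, b)" "chord_index E xs ys (a', b')"
    and R: "is_path (H_verts xs ys) (H_adj E xs ys) R" "hd R = xs ! a'"
      "set R \<subseteq> set (drop a' xs) \<union> set (take b' ys)"
  shows "is_path (H_verts xs ys) (H_adj E xs ys)
    (drop s (take (Suc a) xs) @ rev (drop b' (take (Suc b) ys)) @ R)"
    (is "is_path _ _ (?X @ ?Y @ R)")
proof -
  have "a < length xs" using ch(1) by (simp add: chord_index_def)
  have Xsub: "set ?X \<subseteq> set (take (Suc a) xs)" and Ysub: "set ?Y \<subseteq> set (drop b' ys)"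
    using set_drop_take_subset[of s "Suc a" xs] set_drop_take_subset[of b' "Suc b" ys] by auto
  have "set ?Y \<inter> set R = {}"
    using Ysub R(3) set_drop_subset[of a' xs] set_drop_subset[of b' ys] dxy
      set_take_disj_set_drop_if_distinct[OF dy order_refl, of b']
    by blast
  then have YR: "is_path (H_verts xs ys) (H_adj E xs ys) (?Y @ R)"
    using R ab is_path_H_segment_right[OF dy, of b' b] H_adj_sym[OF H_adj_chord_index[OF ch(2)]]
    by (intro is_path_append) (auto simp: last_rev hd_drop_take)
  have "set (?Y @ R) \<subseteq> set ys \<union> set (drop (Suc a) xs)"
    using Ysub R(3) set_drop_subset_set_drop[of "Suc a" a' xs] ab set_drop_subset[of b' ys]
      set_take_subset[of b' ys]
    by auto
  then have "set ?X \<inter> set (?Y @ R) = {}"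
    using Xsub dxy set_take_disj_set_drop_if_distinct[OF dx order_refl, of "Suc a"]
      set_take_subset[of "Suc a" xs]
    by blast
  moreover have "H_adj E xs ys (last ?X) (hd (?Y @ R))"
    using ab \<open>a < length xs\<close> H_adj_chord_index[OF ch(1)] by (simp add: last_take_Suc hd_rev)
  ultimately show ?thesis
    using is_path_append is_path_H_segment_left[OF dx ab(1) \<open>a < length xs\<close>] YR by blast
qed

lemma zigzag_is_path:
  assumes dx: "distinct xs" and dy: "distinct ys" and dxy: "set xs \<inter> set ys = {}"
  shows "sorted_wrt cross_less cs \<Longrightarrow> \<forall>c\<in>set cs. chord_index E xs ys c \<Longrightarrow>
    odd (length cs) \<Longrightarrow> s \<le> fst (hd cs) \<Longrightarrow>
    is_path (H_verts xs ys) (H_adj E xs ys) (zigzag xs ys s cs)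
    \<and> hd (zigzag xs ys s cs) = xs ! s \<and> last (zigzag xs ys s cs) = ys ! 0
    \<and> int (length (zigzag xs ys s cs)) = alt_sum (\<lambda>c. int (fst c + snd c)) cs - int s + int (length cs) + 1
    \<and> set (zigzag xs ys s cs) \<subseteq> set (drop s xs) \<union> set (take (Suc (snd (hd cs))) ys)"
proof (induction cs arbitrary: s rule: induct_list012)
  case 1
  then show ?case by simp
next
  case (2 c)
  obtain a b where c: "c = (a, b)" by force
  have ab: "a < length xs" "b < length ys" "s \<le> a" and ch: "chord_index E xs ys (a, b)"
    using "2.prems" by (auto simp: c chord_index_def)
  let ?X = "drop s (take (Suc a) xs)" and ?Y = "rev (take (Suc b) ys)"
  have "is_path (H_verts xs ys) (H_adj E xs ys) ?X"
    using is_path_H_segment_left[OF dx ab(3,1)] .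
  moreover have "is_path (H_verts xs ys) (H_adj E xs ys) ?Y"
    using is_path_H_segment_right[OF dy _ ab(2), of 0] by simp
  moreover have "set ?X \<inter> set ?Y = {}"
    using dxy by (auto dest: in_set_dropD in_set_takeD)
  moreover have "H_adj E xs ys (last ?X) (hd ?Y)"
    using ab H_adj_chord_index[OF ch] by (simp add: last_take_Suc hd_rev)
  ultimately have "is_path (H_verts xs ys) (H_adj E xs ys) (?X @ ?Y)" by (rule is_path_append)
  moreover have "hd (?X @ ?Y) = xs ! s" using ab by (simp add: hd_drop_take)
  moreover have "last (?X @ ?Y) = ys ! 0" using ab by (cases ys) auto
  moreover have "set (?X @ ?Y) \<subseteq> set (drop s xs) \<union> set (take (Suc b) ys)"
    using set_drop_take_subset[of s "Suc a" xs] by auto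
  ultimately show ?case using ab by (simp add: c)
next
  case (3 c d cs)
  obtain a b a' b' where cd: "c = (a, b)" "d = (a', b')" by force
  have ab: "s \<le> a" "a < a'" "b' < b" "a < length xs" "b < length ys"
    and ch: "chord_index E xs ys (a, b)" "chord_index E xs ys (a', b')"
    using "3.prems" by (auto simp: cd chord_index_def cross_less_def)
  have cs: "cs \<noteq> []" "a' \<le> fst (hd cs)" "snd (hd cs) < b'"
    using "3.prems" by (cases cs; auto simp: cd cross_less_def)+
  let ?X = "drop s (take (Suc a) xs)" and ?Y = "rev (drop b' (take (Suc b) ys))"
    and ?R = "zigzag xs ys a' cs"
  have R: "is_path (H_verts xs ys) (H_adj E xs ys) ?R" "hd ?R = xs ! a'" "last ?R = ys ! 0"
    "int (length ?R) = alt_sum (\<lambda>c. int (fst c + snd c)) cs - int a' + int (length cs) + 1"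
    "set ?R \<subseteq> set (drop a' xs) \<union> set (take b' ys)"
    using "3.IH"(1)[of a'] "3.prems" cs set_take_subset_set_take[of "Suc (snd (hd cs))" b' ys]
    by (auto simp: cd)
  have "is_path (H_verts xs ys) (H_adj E xs ys) (?X @ ?Y @ ?R)"
    using ab by (intro zigzag_step_is_path[OF dx dy dxy _ _ _ _ ch R(1,2,5)]) auto
  moreover have "hd (?X @ ?Y @ ?R) = xs ! s" "last (?X @ ?Y @ ?R) = ys ! 0"
    using ab R(1,3) by (auto simp: hd_drop_take is_path_def)
  moreover have "set (?X @ ?Y @ ?R) \<subseteq> set (drop s xs) \<union> set (take (Suc b) ys)"
    using set_drop_take_subset[of s "Suc a" xs] set_drop_take_subset[of b' "Suc b" ys] R(5)
      set_drop_subset_set_drop[of s a' xs] set_take_subset_set_take[of b' "Suc b" ys] ab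
    by auto
  ultimately show ?case using R(4) ab by (simp add: cd)
qed

corollary zigzag_from_top:
  assumes "distinct xs" "distinct ys" "set xs \<inter> set ys = {}" "xs \<noteq> []" "ys \<noteq> []"
    and "sorted_wrt cross_less cs" "\<forall>c\<in>set cs. chord_index E xs ys c" "odd (length cs)"
  shows "is_path (H_verts xs ys) (H_adj E xs ys) (zigzag xs ys 0 cs)
    \<and> hd (zigzag xs ys 0 cs) = hd xs \<and> last (zigzag xs ys 0 cs) = hd ys
    \<and> int (path_len (zigzag xs ys 0 cs)) = zigzag_value (\<lambda>c. int (fst c + snd c)) False cs"
proof -
  have "is_path (H_verts xs ys) (H_adj E xs ys) (zigzag xs ys 0 cs)
    \<and> hd (zigzag xs ys 0 cs) = xs ! 0 \<and> last (zigzag xs ys 0 cs) = ys ! 0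
    \<and> int (length (zigzag xs ys 0 cs)) = alt_sum (\<lambda>c. int (fst c + snd c)) cs + int (length cs) + 1"
    using zigzag_is_path[OF assms(1-3,6-8), of 0] by simp
  moreover from this have "zigzag xs ys 0 cs \<noteq> []" by (simp add: is_path_def)
  ultimately show ?thesis
    using assms(4,5) by (auto simp: path_len_def zigzag_value_def hd_conv_nth of_nat_diff Suc_le_eq)
qed

section \<open>Interlacing chords as position pairs\<close>

lemma nth_pos:
  assumes "v \<in> set p"
  shows "pos p v < length p" "p ! pos p v = v"
proof -
  have "\<exists>i. i < length p \<and> p ! i = v" using assms by (auto simp: in_set_conv_nth)
  from LeastI_ex[OF this] show "pos p v < length p" "p ! pos p v = v" unfolding pos_def by auto
qed

lemma pos_inject: "u \<in> set p \<Longrightarrow> v \<in> set p \<Longrightarrow> pos p u = pos p v \<longleftrightarrow> u = v"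
  by (metis nth_pos(2))

definition chord_pos :: "'a list \<Rightarrow> 'a list \<Rightarrow> 'a \<times> 'a \<Rightarrow> nat \<times> nat" where
  "chord_pos xs ys c = (pos xs (fst c), pos ys (snd c))"

lemma chord_index_chord_pos: "is_chord E xs ys c \<Longrightarrow> chord_index E xs ys (chord_pos xs ys c)"
  unfolding is_chord_def chord_index_def chord_pos_def by (simp add: nth_pos)

lemma chord_length_chord_pos: "chord_length xs ys c = fst (chord_pos xs ys c) + snd (chord_pos xs ys c)"
  by (simp add: chord_length_def chord_pos_def)

lemma interlacing_cross_less:
  assumes "is_chord E xs ys c1" "is_chord E xs ys c2" "interlacing xs ys c1 c2"
  shows "cross_less (chord_pos xs ys c1) (chord_pos xs ys c2)
    \<or> cross_less (chord_pos xs ys c2) (chord_pos xs ys c1)"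
proof -
  have "fst c1 \<in> set xs" "fst c2 \<in> set xs" "snd c1 \<in> set ys" "snd c2 \<in> set ys"
    using assms(1,2) by (auto simp: is_chord_def)
  then have "pos xs (fst c1) \<noteq> pos xs (fst c2)" "pos ys (snd c1) \<noteq> pos ys (snd c2)"
    and "\<not> (pos xs (fst c1) < pos xs (fst c2) \<and> pos ys (snd c1) < pos ys (snd c2))"
    and "\<not> (pos xs (fst c2) < pos xs (fst c1) \<and> pos ys (snd c2) < pos ys (snd c1))"
    using assms(3) by (auto simp: interlacing_def Defs.parallel_def above_def pos_inject)
  then show ?thesis by (auto simp: cross_less_def chord_pos_def)
qed

lemma sorted_list_of_set_cross_less:
  fixes K :: "(nat \<times> nat) set"
  assumes "\<forall>c\<in>K. \<forall>d\<in>K. c \<noteq> d \<longrightarrow> cross_less c d \<or> cross_less d c"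
  shows "sorted_wrt cross_less (sorted_list_of_set K)"
proof (rule sorted_wrt_mono_rel[OF _ strict_sorted_list_of_set])
  fix c d assume "c \<in> set (sorted_list_of_set K)" "d \<in> set (sorted_list_of_set K)" "c < d"
  then have "cross_less c d \<or> cross_less d c"
    using assms by (cases "finite K") auto
  with \<open>c < d\<close> show "cross_less c d" by (auto simp: cross_less_def less_prod_def)
qed

lemma interlacing_chords_sorted_positions:
  assumes "finite C" "\<forall>c\<in>C. is_chord E xs ys c"
    and "\<forall>c1\<in>C. \<forall>c2\<in>C. c1 \<noteq> c2 \<longrightarrow> interlacing xs ys c1 c2"
  obtains ks where "sorted_wrt cross_less ks" "length ks = card C" "set ks = chord_pos xs ys ` C"
proof
  let ?ks = "sorted_list_of_set (chord_pos xs ys ` C)"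
  have cross: "cross_less (chord_pos xs ys c1) (chord_pos xs ys c2)
      \<or> cross_less (chord_pos xs ys c2) (chord_pos xs ys c1)"
    if "c1 \<in> C" "c2 \<in> C" "c1 \<noteq> c2" for c1 c2
    using interlacing_cross_less assms(2,3) that by blast
  then show "sorted_wrt cross_less ?ks"
    by (intro sorted_list_of_set_cross_less) blast
  have "inj_on (chord_pos xs ys) C"
  proof (rule inj_onI, rule ccontr)
    fix c1 c2 assume "c1 \<in> C" "c2 \<in> C" "chord_pos xs ys c1 = chord_pos xs ys c2" "c1 \<noteq> c2"
    then show False using cross[of c1 c2] by (simp add: cross_less_def)
  qed
  then show "length ?ks = card C" by (simp add: card_image)
  show "set ?ks = chord_pos xs ys ` C" using assms(1) by simp
qed

lemma growth_from_increments:
  fixes f :: "nat \<Rightarrow> nat"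
  assumes "\<And>i. 1 \<le> i \<Longrightarrow> i < n \<Longrightarrow> f i < f (Suc i)" "1 \<le> n"
  shows "f 1 + n - 1 \<le> f n"
  using assms
proof (induction n)
  case (Suc n)
  show ?case
  proof (cases "n = 0")
    case False
    then have "f 1 + n - 1 \<le> f n" "f n < f (Suc n)" using Suc by auto
    then show ?thesis by linarith
  qed simp
qed simp

theorem lemma4p4:
  fixes V :: "'a set" and E :: "'a \<Rightarrow> 'a \<Rightarrow> bool" and xs ys :: "'a list"
    and C :: "('a \<times> 'a) set" and t D :: nat
  assumes "graph V E"
    and "section_pair V E xs ys"
    and "t \<ge> 1" and "D \<ge> 1"
    and "finite C" and "card C = 3 * t"
    and "\<forall>c\<in>C. is_chord E xs ys c"
    and "\<forall>c1\<in>C. \<forall>c2\<in>C. c1 \<noteq> c2 \<longrightarrow> interlacing xs ys c1 c2"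
    and "\<exists>a. \<forall>c\<in>C. chord_length xs ys c \<in> {a..<a + D}"
  shows "\<exists>P :: nat \<Rightarrow> 'a list.
           (\<forall>i\<in>{1..t}. is_path (H_verts xs ys) (H_adj E xs ys) (P i)
                         \<and> hd (P i) = hd xs \<and> last (P i) = hd ys)
         \<and> (\<forall>i\<in>{1..<t}. 1 \<le> int (path_len (P (Suc i))) - int (path_len (P i))
                        \<and> int (path_len (P (Suc i))) - int (path_len (P i)) \<le> 2 * int D)
         \<and> path_len (P t) \<ge> path_len (P 1) + t - 1"
proof -
  let ?w = "\<lambda>c. int (fst c + snd c)"
  have xy: "distinct xs" "distinct ys" "set xs \<inter> set ys = {}" "xs \<noteq> []" "ys \<noteq> []"
    using assms(2) by (auto simp: section_pair_def is_path_def)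
  obtain ks where ks: "sorted_wrt cross_less ks" "length ks = 3 * t" "set ks = chord_pos xs ys ` C"
    using interlacing_chords_sorted_positions[OF assms(5,7,8)] assms(6) by metis
  obtain \<alpha> where "\<forall>c\<in>C. chord_length xs ys c \<in> {\<alpha>..<\<alpha> + D}" using assms(9) by blast
  then have "\<forall>c\<in>set ks. ?w c \<in> {int \<alpha>..<int \<alpha> + int D}"
    by (auto simp: ks(3) chord_length_chord_pos)
  moreover have "3 * (t - 1) + 1 \<le> length ks" using ks(2) assms(3) by simp
  ultimately obtain Q where Q: "\<forall>m\<le>t - 1. subseq (Q m) ks \<and> odd (length (Q m))"
    "\<forall>m<t - 1. 1 \<le> zigzag_value ?w False (Q (Suc m)) - zigzag_value ?w False (Q m)
       \<and> zigzag_value ?w False (Q (Suc m)) - zigzag_value ?w False (Q m) \<le> 2 * int D"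
    using zigzag_values_increasing[of "t - 1" ks ?w "int \<alpha>" D False] by auto
  define P where "P i = zigzag xs ys 0 (Q (i - 1))" for i
  have P: "is_path (H_verts xs ys) (H_adj E xs ys) (P i) \<and> hd (P i) = hd xs \<and> last (P i) = hd ys
      \<and> int (path_len (P i)) = zigzag_value ?w False (Q (i - 1))" if "i \<in> {1..t}" for i
  proof -
    have "subseq (Q (i - 1)) ks" "odd (length (Q (i - 1)))" using that Q(1) by auto
    moreover from this have "\<forall>c\<in>set (Q (i - 1)). chord_index E xs ys c"
      using ks(3) chord_index_chord_pos assms(7) by (fastforce dest: set_mono_subseq)
    ultimately show ?thesis
      unfolding P_def using ks(1) by (intro zigzag_from_top xy) (auto dest: sorted_wrt_subseq)
  qed
  have steps: "1 \<le> int (path_len (P (Suc i))) - int (path_len (P i))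
      \<and> int (path_len (P (Suc i))) - int (path_len (P i)) \<le> 2 * int D" if "i \<in> {1..<t}" for i
    using P[of i] P[of "Suc i"] Q(2)[rule_format, of "i - 1"] that by auto
  have "path_len (P 1) + t - 1 \<le> path_len (P t)"
    using growth_from_increments[of t "\<lambda>i. path_len (P i)"] steps assms(3) by force
  with P steps show ?thesis by blast
qed

end
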